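(* Let $S$ be a nonempty set of places of $\mathbb{Q}$, let $F$ be a number field, and let $T=M_F(S)$. Then the restriction map $\rho:\mathcal J^*(\mathbb{Q},S)\to\mathcal J^*(F,T)$, $\rho(c)=c|_{\mathcal J(F,T)}$, is a vector space isomorphism.
   Context: All fields lie in a fixed algebraic closure $\overline{\mathbb{Q}}$. For a number field $F$, a nonempty set $S$ of places of $F$, and a finite extension $K$ of $F$, $M_K(S)$ denotes the set of places of $K$ dividing a place in $S$. Define $\mathcal J(F,S)=\{(K,v): K\supseteq F,\ [K:F]<\infty,\ v\in M_K(S)\}$. A map $c:\mathcal J(F,S)\to\mathbb{R}$ is consistent if $c(K,v)=\sum_{w\mid v}c(L,w)$ for all $(K,v)\in\mathcal J(F,S)$ and all finite extensions $L/K$, the sum running over places $w$ of $L$ dividing $v$. $\mathcal J^*(F,S)$ is the real vector space of consistent maps $\mathcal J(F,S)\to\mathbb{R}$ under pointwise addition and scalar multiplication. *)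

theory Defs
  imports Complex_Main
begin

text \<open>The fixed algebraic closure of Q is realised inside the complex numbers: all
fields are subfields of the complex numbers, and finite extensions of Q inside the
complex numbers are exactly the number fields contained in the algebraic closure.\<close>

definition subfield :: "complex set \<Rightarrow> bool" where
  "subfield K \<longleftrightarrow> 0 \<in> K \<and> 1 \<in> K \<and> (\<forall>x\<in>K. \<forall>y\<in>K. x + y \<in> K \<and> x - y \<in> K \<and> x * y \<in> K)
     \<and> (\<forall>x\<in>K. x \<noteq> 0 \<longrightarrow> inverse x \<in> K)"

definition finite_ext :: "complex set \<Rightarrow> complex set \<Rightarrow> bool" where
  "finite_ext K L \<longleftrightarrow> subfield K \<and> subfield L \<and> K \<subseteq> L \<and>
     (\<exists>B. finite B \<and> B \<subseteq> L \<and> L \<subseteq> {\<Sum>b\<in>B. a b * b | a. \<forall>b\<in>B. a b \<in> K})"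

definition number_field :: "complex set \<Rightarrow> bool" where
  "number_field F \<longleftrightarrow> finite_ext \<rat> F"

text \<open>Nontrivial absolute values on K (taken to be 0 outside K, so that they are
determined by their values on K).\<close>
definition abs_val :: "complex set \<Rightarrow> (complex \<Rightarrow> real) \<Rightarrow> bool" where
  "abs_val K f \<longleftrightarrow>
     (\<forall>x. x \<notin> K \<longrightarrow> f x = 0) \<and>
     (\<forall>x\<in>K. f x \<ge> 0 \<and> (f x = 0 \<longleftrightarrow> x = 0)) \<and>
     (\<forall>x\<in>K. \<forall>y\<in>K. f (x * y) = f x * f y) \<and>
     (\<forall>x\<in>K. \<forall>y\<in>K. f (x + y) \<le> f x + f y) \<and>
     (\<exists>x\<in>K. x \<noteq> 0 \<and> f x \<noteq> 1)"

definition place_of :: "complex set \<Rightarrow> (complex \<Rightarrow> real) \<Rightarrow> (complex \<Rightarrow> real) set" where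
  "place_of K f = {g. abs_val K g \<and> (\<exists>t>0. \<forall>x\<in>K. g x = f x powr t)}"

definition places :: "complex set \<Rightarrow> (complex \<Rightarrow> real) set set" where
  "places K = {place_of K f | f. abs_val K f}"

definition place_divides :: "complex set \<Rightarrow> (complex \<Rightarrow> real) set \<Rightarrow> (complex \<Rightarrow> real) set \<Rightarrow> bool" where
  "place_divides K w v \<longleftrightarrow> (\<exists>g\<in>w. (\<lambda>x. if x \<in> K then g x else 0) \<in> v)"

definition M :: "complex set \<Rightarrow> complex set \<Rightarrow> (complex \<Rightarrow> real) set set \<Rightarrow> (complex \<Rightarrow> real) set set" where
  "M F K S = {w \<in> places K. \<exists>v\<in>S. place_divides F w v}"

definition JJ :: "complex set \<Rightarrow> (complex \<Rightarrow> real) set set \<Rightarrow> (complex set \<times> (complex \<Rightarrow> real) set) set" where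
  "JJ F S = {(K, v). finite_ext F K \<and> v \<in> M F K S}"

text \<open>Consistent maps J(F,S) -> R, represented as functions on all pairs that vanish
outside J(F,S) (so pointwise operations give the vector space structure).\<close>
definition consistent :: "complex set \<Rightarrow> (complex \<Rightarrow> real) set set \<Rightarrow> (complex set \<times> (complex \<Rightarrow> real) set \<Rightarrow> real) \<Rightarrow> bool" where
  "consistent F S c \<longleftrightarrow>
     (\<forall>K v L. (K, v) \<in> JJ F S \<and> finite_ext K L \<longrightarrow>
        c (K, v) = (\<Sum>w\<in>{w \<in> places L. place_divides K w v}. c (L, w)))"

definition Jstar :: "complex set \<Rightarrow> (complex \<Rightarrow> real) set set \<Rightarrow> (complex set \<times> (complex \<Rightarrow> real) set \<Rightarrow> real) set" where
  "Jstar F S = {c. consistent F S c \<and> (\<forall>p. p \<notin> JJ F S \<longrightarrow> c p = 0)}"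

definition restr :: "complex set \<Rightarrow> (complex \<Rightarrow> real) set set \<Rightarrow> (complex set \<times> (complex \<Rightarrow> real) set \<Rightarrow> real) \<Rightarrow> (complex set \<times> (complex \<Rightarrow> real) set \<Rightarrow> real)" where
  "restr F T c = (\<lambda>p. if p \<in> JJ F T then c p else 0)"

end

theory Submission
  imports Defs
begin

text \<open>Every \<open>(K, v)\<close> in \<open>J(\<rat>, S)\<close> lies below the pairs \<open>(FK, w)\<close>, \<open>w | v\<close>, of \<open>J(F, T)\<close>,
  where \<open>FK\<close> is the compositum. Consistency along \<open>K \<subseteq> FK\<close> expresses \<open>c(K, v)\<close> through
  the restriction of \<open>c\<close>, so restriction is injective; conversely the same formula turns a
  consistent map on \<open>J(F, T)\<close> into a consistent map on \<open>J(\<rat>, S)\<close>, since for \<open>K \<subseteq> L\<close> both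
  sides can be computed in \<open>FL\<close> and the places of \<open>FL\<close> above \<open>v\<close> are partitioned according
  to the intermediate places. All sums are finite: the approximation theorem turns
  representatives of distinct places above \<open>v\<close> into diagonally dominant elements, which
  are linearly independent over \<open>K\<close>, so there are at most \<open>[L : K]\<close> of them.\<close>

section \<open>Subfields\<close>

lemma subfield_zero: "subfield K \<Longrightarrow> 0 \<in> K"
  and subfield_one: "subfield K \<Longrightarrow> 1 \<in> K"
  and subfield_add: "subfield K \<Longrightarrow> x \<in> K \<Longrightarrow> y \<in> K \<Longrightarrow> x + y \<in> K"
  and subfield_diff: "subfield K \<Longrightarrow> x \<in> K \<Longrightarrow> y \<in> K \<Longrightarrow> x - y \<in> K"
  and subfield_mult: "subfield K \<Longrightarrow> x \<in> K \<Longrightarrow> y \<in> K \<Longrightarrow> x * y \<in> K"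
  by (simp_all add: subfield_def)

lemma subfield_inverse: "subfield K \<Longrightarrow> x \<in> K \<Longrightarrow> inverse x \<in> K"
  by (cases "x = 0") (auto simp: subfield_def)

lemma subfield_uminus: "subfield K \<Longrightarrow> x \<in> K \<Longrightarrow> - x \<in> K"
  using subfield_diff[of K 0 x] subfield_zero by simp

lemma subfield_divide: "subfield K \<Longrightarrow> x \<in> K \<Longrightarrow> y \<in> K \<Longrightarrow> x / y \<in> K"
  by (simp add: divide_inverse subfield_mult subfield_inverse)

lemma subfield_power: "subfield K \<Longrightarrow> x \<in> K \<Longrightarrow> x ^ n \<in> K"
  by (induction n) (auto simp: subfield_one subfield_mult)

lemma subfield_power_int: "subfield K \<Longrightarrow> x \<in> K \<Longrightarrow> x powi n \<in> K"
  by (simp add: power_int_def subfield_power subfield_inverse)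

lemma subfield_sum: "subfield K \<Longrightarrow> (\<And>i. i \<in> I \<Longrightarrow> f i \<in> K) \<Longrightarrow> sum f I \<in> K"
  by (induction I rule: infinite_finite_induct) (auto simp: subfield_zero subfield_add)

lemma subfield_of_nat: "subfield K \<Longrightarrow> of_nat n \<in> K"
  by (induction n) (auto simp: subfield_zero subfield_one subfield_add)

lemma subfield_of_int:
  assumes "subfield K"
  shows "of_int n \<in> K"
proof (cases "n \<ge> 0")
  case True
  then show ?thesis
    using subfield_of_nat[OF assms, of "nat n"] by simp
next
  case False
  then have "of_int n = - (of_nat (nat (- n)) :: complex)"
    by simp
  then show ?thesis
    using subfield_uminus[OF assms subfield_of_nat[OF assms]] by simp
qed

lemma Rats_subset_subfield: "subfield K \<Longrightarrow> \<rat> \<subseteq> K"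
  by (metis Rats_cases' subfield_divide subfield_of_int subsetI)

lemma subfield_Rats: "subfield \<rat>"
  unfolding subfield_def by auto

lemma subfield_Inter:
  assumes "\<And>Z. Z \<in> A \<Longrightarrow> subfield Z"
  shows "subfield (\<Inter>A)"
  unfolding subfield_def
  using assms subfield_zero subfield_one subfield_add subfield_diff subfield_mult subfield_inverse
  by (meson InterD InterI)

section \<open>Finite extensions\<close>

definition span_over :: "complex set \<Rightarrow> complex set \<Rightarrow> complex set" where
  "span_over K B = {\<Sum>b\<in>B. a b * b | a. \<forall>b\<in>B. a b \<in> K}"

lemma finite_ext_iff_span_over:
  "finite_ext K L \<longleftrightarrow> subfield K \<and> subfield L \<and> K \<subseteq> L \<and>
     (\<exists>B. finite B \<and> B \<subseteq> L \<and> L \<subseteq> span_over K B)"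
  unfolding finite_ext_def span_over_def by simp

lemma finite_ext_imp_subfields: "finite_ext K L \<Longrightarrow> subfield K \<and> subfield L \<and> K \<subseteq> L"
  unfolding finite_ext_def by blast

lemma span_over_zero: "subfield K \<Longrightarrow> 0 \<in> span_over K B"
  unfolding span_over_def by (auto intro!: exI[of _ "\<lambda>_. 0"] simp: subfield_zero)

lemma span_over_add:
  assumes "subfield K" "x \<in> span_over K B" "y \<in> span_over K B"
  shows "x + y \<in> span_over K B"
proof -
  obtain a a' where "x = (\<Sum>b\<in>B. a b * b)" "\<forall>b\<in>B. a b \<in> K"
    and "y = (\<Sum>b\<in>B. a' b * b)" "\<forall>b\<in>B. a' b \<in> K"
    using assms(2,3) unfolding span_over_def by blast
  with assms(1) show ?thesis
    unfolding span_over_def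
    by (auto intro!: exI[of _ "\<lambda>b. a b + a' b"] simp: sum.distrib distrib_right subfield_add)
qed

lemma span_over_scale:
  assumes "subfield K" "k \<in> K" "x \<in> span_over K B"
  shows "k * x \<in> span_over K B"
proof -
  obtain a where "x = (\<Sum>b\<in>B. a b * b)" "\<forall>b\<in>B. a b \<in> K"
    using assms(3) unfolding span_over_def by blast
  with assms(1,2) show ?thesis
    unfolding span_over_def
    by (auto intro!: exI[of _ "\<lambda>b. k * a b"] simp: sum_distrib_left mult.assoc subfield_mult)
qed

lemma span_over_sum:
  "subfield K \<Longrightarrow> (\<And>i. i \<in> I \<Longrightarrow> f i \<in> span_over K B) \<Longrightarrow> sum f I \<in> span_over K B"
  by (induction I rule: infinite_finite_induct) (auto simp: span_over_zero span_over_add)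

lemma span_over_generator:
  assumes "finite B" "subfield K" "c \<in> B"
  shows "c \<in> span_over K B"
proof -
  have "(\<Sum>b\<in>B. (if b = c then 1 else 0) * b) = (\<Sum>b\<in>B. if b = c then b else 0)"
    by (rule sum.cong) auto
  then have "c = (\<Sum>b\<in>B. (if b = c then 1 else 0) * b)"
    using assms(1,3) by simp
  then show ?thesis
    unfolding span_over_def using assms(2) by (auto simp: subfield_zero subfield_one)
qed

lemma span_over_mono: "K \<subseteq> K' \<Longrightarrow> span_over K B \<subseteq> span_over K' B"
  unfolding span_over_def by blast

lemma span_over_mult_right:
  assumes K: "subfield K" and y: "y \<in> span_over K B"
    and gen: "\<And>b. b \<in> B \<Longrightarrow> b * c \<in> span_over K D"
  shows "y * c \<in> span_over K D"
proof -
  obtain a where a: "y = (\<Sum>b\<in>B. a b * b)" "\<forall>b\<in>B. a b \<in> K"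
    using y unfolding span_over_def by blast
  have "y * c = (\<Sum>b\<in>B. a b * (b * c))"
    unfolding a(1) by (simp add: sum_distrib_right mult.assoc)
  also have "\<dots> \<in> span_over K D"
    using a(2) by (intro span_over_sum[OF K] span_over_scale[OF K] gen) auto
  finally show ?thesis .
qed

lemma coordinates_dependent:
  assumes "finite B" "subfield K" "finite I" "card B < card I" "\<forall>i\<in>I. \<forall>b\<in>B. c i b \<in> K"
  shows "\<exists>a. (\<forall>i\<in>I. a i \<in> K) \<and> (\<exists>i\<in>I. a i \<noteq> 0) \<and> (\<forall>b\<in>B. (\<Sum>i\<in>I. a i * c i b) = 0)"
  using assms(1,3-5)
proof (induction B arbitrary: I c rule: finite_induct)
  case empty
  then obtain i where "i \<in> I" by fastforce
  then show ?case using assms(2) by (intro exI[of _ "\<lambda>_. 1"]) (auto simp: subfield_one)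
next
  case (insert b0 B)
  show ?case
  proof (cases "\<forall>i\<in>I. c i b0 = 0")
    case True
    have "card B < card I"
      using insert by simp
    then obtain a where "\<forall>i\<in>I. a i \<in> K" "\<exists>i\<in>I. a i \<noteq> 0" "\<forall>b\<in>B. (\<Sum>i\<in>I. a i * c i b) = 0"
      using insert.IH[of I c] insert.prems by auto
    with True show ?thesis by auto
  next
    case False
    then obtain i0 where i0: "i0 \<in> I" "c i0 b0 \<noteq> 0" by auto
    \<comment> \<open>Gaussian elimination of the coordinate \<open>b0\<close> using the row \<open>i0\<close>.\<close>
    define r where "r i = c i b0 / c i0 b0" for i
    define c' where "c' i b = c i b - r i * c i0 b" for i b
    have "card B < card (I - {i0})" using insert i0 by simp
    moreover have "\<forall>i\<in>I - {i0}. \<forall>b\<in>B. c' i b \<in> K"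
      using insert.prems(3) i0 assms(2) unfolding c'_def r_def
      by (auto intro!: subfield_diff subfield_mult subfield_divide)
    ultimately obtain a' where a': "\<forall>i\<in>I - {i0}. a' i \<in> K" "\<exists>i\<in>I - {i0}. a' i \<noteq> 0"
       "\<forall>b\<in>B. (\<Sum>i\<in>I - {i0}. a' i * c' i b) = 0"
      using insert.IH[of "I - {i0}" c'] insert.prems(1) by auto
    define a where "a i = (if i = i0 then - (\<Sum>j\<in>I - {i0}. a' j * r j) else a' i)" for i
    have eliminated: "(\<Sum>i\<in>I. a i * c i b) = (\<Sum>i\<in>I - {i0}. a' i * c' i b)" for b
    proof -
      have "(\<Sum>i\<in>I. a i * c i b) = a i0 * c i0 b + (\<Sum>i\<in>I - {i0}. a i * c i b)"
        by (rule sum.remove[OF insert.prems(1) i0(1)])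
      also have "(\<Sum>i\<in>I - {i0}. a i * c i b) = (\<Sum>i\<in>I - {i0}. a' i * c i b)"
        unfolding a_def by simp
      also have "a i0 * c i0 b = - (\<Sum>j\<in>I - {i0}. a' j * r j * c i0 b)"
        unfolding a_def by (simp add: sum_distrib_right)
      finally show ?thesis
        unfolding c'_def by (simp add: algebra_simps sum_subtractf)
    qed
    have "c' i b0 = 0" for i
      using i0 unfolding c'_def r_def by simp
    then have "\<forall>b\<in>insert b0 B. (\<Sum>i\<in>I. a i * c i b) = 0"
      using eliminated a'(3) by auto
    moreover have "\<forall>i\<in>I. a i \<in> K"
      using a'(1) i0 assms(2) insert.prems(3) unfolding a_def r_def
      by (auto intro!: subfield_uminus subfield_sum subfield_mult subfield_divide)
    moreover have "\<exists>i\<in>I. a i \<noteq> 0"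
      using a'(2) unfolding a_def by auto
    ultimately show ?thesis by blast
  qed
qed

lemma span_over_dependent:
  assumes "finite B" "subfield K" "finite I" "card B < card I"
    and "\<And>i. i \<in> I \<Longrightarrow> y i \<in> span_over K B"
  shows "\<exists>a. (\<forall>i\<in>I. a i \<in> K) \<and> (\<exists>i\<in>I. a i \<noteq> 0) \<and> (\<Sum>i\<in>I. a i * y i) = 0"
proof -
  have "\<forall>i\<in>I. \<exists>c. y i = (\<Sum>b\<in>B. c b * b) \<and> (\<forall>b\<in>B. c b \<in> K)"
    using assms(5) unfolding span_over_def by blast
  then obtain c where c: "\<And>i. i \<in> I \<Longrightarrow> y i = (\<Sum>b\<in>B. c i b * b) \<and> (\<forall>b\<in>B. c i b \<in> K)"
    by metis
  obtain a where a: "\<forall>i\<in>I. a i \<in> K" "\<exists>i\<in>I. a i \<noteq> 0" "\<forall>b\<in>B. (\<Sum>i\<in>I. a i * c i b) = 0"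
    using coordinates_dependent[OF assms(1-4), of c] c by auto
  have "(\<Sum>i\<in>I. a i * y i) = (\<Sum>i\<in>I. \<Sum>b\<in>B. a i * c i b * b)"
    using c by (simp add: sum_distrib_left mult.assoc)
  also have "\<dots> = (\<Sum>b\<in>B. (\<Sum>i\<in>I. a i * c i b) * b)"
    by (subst sum.swap) (simp add: sum_distrib_right)
  also have "\<dots> = 0" using a(3) by simp
  finally show ?thesis using a(1,2) by blast
qed

lemma finite_ext_trans:
  assumes "finite_ext K L" "finite_ext L Z"
  shows "finite_ext K Z"
proof -
  obtain B where B: "finite B" "B \<subseteq> L" "L \<subseteq> span_over K B"
    and K: "subfield K" "subfield L" "K \<subseteq> L"
    using assms(1) unfolding finite_ext_iff_span_over by blast
  obtain C where C: "finite C" "C \<subseteq> Z" "Z \<subseteq> span_over L C" and Z: "subfield Z" "L \<subseteq> Z"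
    using assms(2) unfolding finite_ext_iff_span_over by blast
  define D where "D = (\<lambda>(b, c). b * c) ` (B \<times> C)"
  have D: "finite D" "D \<subseteq> Z"
    unfolding D_def using B C Z by (auto intro!: subfield_mult)
  have "Z \<subseteq> span_over K D"
  proof
    fix x assume "x \<in> Z"
    then obtain a where a: "x = (\<Sum>c\<in>C. a c * c)" "\<forall>c\<in>C. a c \<in> L"
      using C unfolding span_over_def by blast
    have "a c * c \<in> span_over K D" if "c \<in> C" for c
    proof (rule span_over_mult_right[OF K(1)])
      show "a c \<in> span_over K B" using a(2) that B by auto
      show "b * c \<in> span_over K D" if "b \<in> B" for b
        using D(1) K(1) \<open>c \<in> C\<close> \<open>b \<in> B\<close> by (intro span_over_generator) (auto simp: D_def)
    qed
    then show "x \<in> span_over K D"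
      unfolding a(1) using K(1) by (intro span_over_sum) auto
  qed
  then show ?thesis
    unfolding finite_ext_iff_span_over using K Z D by blast
qed

lemma finite_ext_intermediate:
  assumes "finite_ext K Z" "subfield N" "K \<subseteq> N" "N \<subseteq> Z"
  shows "finite_ext N Z"
proof -
  obtain B where B: "finite B" "B \<subseteq> Z" "Z \<subseteq> span_over K B" "subfield Z"
    using assms(1) unfolding finite_ext_iff_span_over by blast
  have "Z \<subseteq> span_over N B"
    using B(3) span_over_mono[OF assms(3)] by (rule order.trans)
  then show ?thesis
    unfolding finite_ext_iff_span_over using B assms(2,4) by blast
qed

lemma number_field_subfield: "number_field K \<Longrightarrow> subfield K"
  unfolding number_field_def finite_ext_def by blast

lemma number_field_finite_ext: "number_field K \<Longrightarrow> finite_ext K L \<Longrightarrow> number_field L"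
  unfolding number_field_def using finite_ext_trans by blast

lemma number_field_imp_finite_ext:
  assumes "number_field L" "subfield K" "K \<subseteq> L"
  shows "finite_ext K L"
  using finite_ext_intermediate[OF assms(1)[unfolded number_field_def] assms(2)
      Rats_subset_subfield[OF assms(2)] assms(3)] .

lemma inverse_eq_of_power_relation:
  fixes x :: "'a::field"
  assumes x: "x \<noteq> 0" and rel: "(\<Sum>i\<le>n. a i * x ^ i) = 0"
    and k: "a k \<noteq> 0" "k \<le> n" "\<forall>i<k. a i = 0"
  shows "inverse x = - inverse (a k) * (\<Sum>i\<in>{k<..n}. a i * x ^ (i - Suc k))"
proof -
  define s where "s = (\<Sum>i\<in>{k<..n}. a i * x ^ (i - Suc k))"
  have "(\<Sum>i\<in>{k<..n}. a i * x ^ i) = x ^ Suc k * s"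
    unfolding s_def sum_distrib_left
  proof (rule sum.cong[OF refl])
    fix i assume "i \<in> {k<..n}"
    then have "i = Suc k + (i - Suc k)"
      by simp
    then show "a i * x ^ i = x ^ Suc k * (a i * x ^ (i - Suc k))"
      by (metis power_add mult.left_commute)
  qed
  moreover have "(\<Sum>i\<le>n. a i * x ^ i) = (\<Sum>i\<in>{k..n}. a i * x ^ i)"
    using k(3) by (intro sum.mono_neutral_right) auto
  moreover have "{k..n} = insert k {k<..n}"
    using k(2) by auto
  ultimately have "x ^ k * (a k + x * s) = 0"
    using rel by (simp add: algebra_simps)
  then have "x * s = - a k"
    using x by (simp add: add_eq_0_iff)
  then show ?thesis
    unfolding s_def[symmetric] using x k(1) by (simp add: field_simps)
qed

lemma span_over_inverse:
  assumes K: "subfield K" and B: "finite B" and one: "1 \<in> span_over K B"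
    and mult: "\<And>x y. x \<in> span_over K B \<Longrightarrow> y \<in> span_over K B \<Longrightarrow> x * y \<in> span_over K B"
    and x: "x \<in> span_over K B" "x \<noteq> 0"
  shows "inverse x \<in> span_over K B"
proof -
  have powers: "x ^ i \<in> span_over K B" for i
    by (induction i) (auto simp: one mult x)
  obtain a where a: "\<forall>i\<le>card B. a i \<in> K" "\<exists>i\<le>card B. a i \<noteq> 0"
    "(\<Sum>i\<le>card B. a i * x ^ i) = 0"
    using span_over_dependent[OF B K, of "{..card B}" "\<lambda>i. x ^ i"] powers by auto
  define k where "k = (LEAST i. a i \<noteq> 0)"
  obtain i0 where i0: "i0 \<le> card B" "a i0 \<noteq> 0"
    using a(2) by blast
  have "a k \<noteq> 0"
    unfolding k_def by (rule LeastI[of _ i0]) (fact i0(2))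
  moreover have "k \<le> card B"
    using Least_le[of "\<lambda>i. a i \<noteq> 0" i0] i0 unfolding k_def by linarith
  moreover have "\<forall>i<k. a i = 0"
    unfolding k_def using not_less_Least by blast
  ultimately have k: "a k \<noteq> 0" "k \<le> card B" "\<forall>i<k. a i = 0" .
  have "- inverse (a k) * (\<Sum>i\<in>{k<..card B}. a i * x ^ (i - Suc k)) \<in> span_over K B"
    using a(1) k(2) K
    by (intro span_over_scale span_over_sum powers subfield_uminus subfield_inverse) auto
  then show ?thesis
    using inverse_eq_of_power_relation[OF x(2) a(3) k] by simp
qed

lemma subfield_span_over:
  assumes K: "subfield K" and B: "finite B" and one: "1 \<in> span_over K B"
    and mult: "\<And>x y. x \<in> span_over K B \<Longrightarrow> y \<in> span_over K B \<Longrightarrow> x * y \<in> span_over K B"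
  shows "subfield (span_over K B)"
  unfolding subfield_def
proof (intro conjI ballI impI)
  fix x y assume xy: "x \<in> span_over K B" "y \<in> span_over K B"
  have "(- 1) * y \<in> span_over K B"
    using span_over_scale[OF K _ xy(2)] subfield_uminus[OF K subfield_one[OF K]] by blast
  then show "x - y \<in> span_over K B"
    using span_over_add[OF K xy(1), of "(- 1) * y"] by simp
qed (use assms span_over_zero span_over_add span_over_inverse in auto)

definition compositum :: "complex set \<Rightarrow> complex set \<Rightarrow> complex set" where
  "compositum F K = \<Inter>{Z. subfield Z \<and> K \<subseteq> Z \<and> F \<subseteq> Z}"

lemma subfield_compositum: "subfield (compositum F K)"
  and subset_compositum_right: "K \<subseteq> compositum F K"
  and subset_compositum_left: "F \<subseteq> compositum F K"
  unfolding compositum_def by (auto intro!: subfield_Inter)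

lemma compositum_eq: "subfield K \<Longrightarrow> F \<subseteq> K \<Longrightarrow> compositum F K = K"
  unfolding compositum_def by blast

lemma compositum_mono: "K \<subseteq> L \<Longrightarrow> compositum F K \<subseteq> compositum F L"
  unfolding compositum_def by blast

text \<open>A \<open>\<rat>\<close>-basis \<open>B\<close> of \<open>F\<close> spans a subfield over \<open>K\<close> containing \<open>K\<close> and \<open>F\<close>, hence
  the compositum.\<close>

lemma finite_ext_compositum:
  assumes F: "number_field F" and K: "subfield K"
  shows "finite_ext K (compositum F K)"
proof -
  obtain B where B: "finite B" "B \<subseteq> F" "F \<subseteq> span_over \<rat> B" and Fs: "subfield F"
    using F unfolding number_field_def finite_ext_iff_span_over by blast
  let ?V = "span_over K B"
  have FV: "F \<subseteq> ?V"
    using B(3) span_over_mono[OF Rats_subset_subfield[OF K]] by blast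
  have mult: "x * y \<in> ?V" if "x \<in> ?V" "y \<in> ?V" for x y
  proof (rule span_over_mult_right[OF K \<open>x \<in> ?V\<close>])
    fix b assume "b \<in> B"
    have "y * b \<in> ?V"
      using \<open>y \<in> ?V\<close> by (rule span_over_mult_right[OF K])
        (use FV B(2) Fs \<open>b \<in> B\<close> in \<open>auto intro: subfield_mult\<close>)
    then show "b * y \<in> ?V" by (simp add: mult.commute)
  qed
  have one: "1 \<in> ?V"
    using FV subfield_one[OF Fs] by blast
  have "K \<subseteq> ?V"
    using span_over_scale[OF K _ one] by force
  then have "compositum F K \<subseteq> ?V"
    unfolding compositum_def using subfield_span_over[OF K B(1) one mult] FV by blast
  moreover have "B \<subseteq> compositum F K"
    using B(2) subset_compositum_left by blast
  ultimately show ?thesis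
    unfolding finite_ext_iff_span_over using K subfield_compositum subset_compositum_right B(1)
    by blast
qed

lemma number_field_compositum:
  assumes "number_field F" "number_field K"
  shows "number_field (compositum F K)"
  using finite_ext_compositum[OF assms(1) number_field_subfield[OF assms(2)]]
  by (rule number_field_finite_ext[OF assms(2)])

lemma finite_ext_compositum_mono:
  assumes F: "number_field F" and K: "number_field K" and L: "finite_ext K L"
  shows "finite_ext (compositum F K) (compositum F L)"
  using number_field_compositum[OF F number_field_finite_ext[OF K L]]
    subfield_compositum compositum_mono finite_ext_imp_subfields[OF L]
  by (intro number_field_imp_finite_ext) auto

section \<open>Absolute values\<close>

lemma abs_val_outside: "abs_val K f \<Longrightarrow> x \<notin> K \<Longrightarrow> f x = 0"
  and abs_val_mult: "abs_val K f \<Longrightarrow> x \<in> K \<Longrightarrow> y \<in> K \<Longrightarrow> f (x * y) = f x * f y"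
  and abs_val_triangle: "abs_val K f \<Longrightarrow> x \<in> K \<Longrightarrow> y \<in> K \<Longrightarrow> f (x + y) \<le> f x + f y"
  and abs_val_nontrivial: "abs_val K f \<Longrightarrow> \<exists>x\<in>K. x \<noteq> 0 \<and> f x \<noteq> 1"
  unfolding abs_val_def by blast+

lemma abs_val_nonneg: "abs_val K f \<Longrightarrow> 0 \<le> f x"
  unfolding abs_val_def by (cases "x \<in> K") auto

lemma abs_val_zero: "abs_val K f \<Longrightarrow> f 0 = 0"
  unfolding abs_val_def by (cases "0 \<in> K") auto

lemma abs_val_pos: "abs_val K f \<Longrightarrow> x \<in> K \<Longrightarrow> x \<noteq> 0 \<Longrightarrow> 0 < f x"
  unfolding abs_val_def by (metis less_eq_real_def)

context
  fixes K f
  assumes f: "abs_val K f" and K: "subfield K"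
begin

lemma abs_val_one: "f 1 = 1"
proof -
  have "f 1 = f 1 * f 1"
    using abs_val_mult[OF f, of 1 1] subfield_one[OF K] by simp
  moreover have "0 < f 1"
    using abs_val_pos[OF f subfield_one[OF K]] by simp
  ultimately show ?thesis by simp
qed

lemma abs_val_uminus: "x \<in> K \<Longrightarrow> f (- x) = f x"
proof -
  have m: "- 1 \<in> K"
    using subfield_uminus[OF K subfield_one[OF K]] .
  have "f (- 1) * f (- 1) = 1"
    using abs_val_mult[OF f m m] abs_val_one by simp
  then have "f (- 1) ^ 2 = 1 ^ 2"
    by (simp add: power2_eq_square)
  then have "f (- 1) = 1"
    using power2_eq_iff_nonneg abs_val_nonneg[OF f] zero_le_one by blast
  then show "x \<in> K \<Longrightarrow> f (- x) = f x"
    using abs_val_mult[OF f m] by (metis mult_minus1 mult_1)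
qed

lemma abs_val_power: "x \<in> K \<Longrightarrow> f (x ^ n) = f x ^ n"
  by (induction n) (auto simp: abs_val_one abs_val_mult[OF f] subfield_power[OF K])

lemma abs_val_inverse: "x \<in> K \<Longrightarrow> f (inverse x) = inverse (f x)"
proof (cases "x = 0")
  case True
  then show ?thesis using abs_val_zero[OF f] by simp
next
  case False
  assume x: "x \<in> K"
  have "f x * f (inverse x) = 1"
    using abs_val_mult[OF f x subfield_inverse[OF K x]] False abs_val_one by simp
  from inverse_unique[OF this] show ?thesis
    by simp
qed

lemma abs_val_divide: "x \<in> K \<Longrightarrow> y \<in> K \<Longrightarrow> f (x / y) = f x / f y"
  using abs_val_mult[OF f _ subfield_inverse[OF K]] abs_val_inverse
  by (simp add: divide_inverse)

lemma abs_val_power_int: "x \<in> K \<Longrightarrow> f (x powi n) = f x powi n"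
  by (simp add: power_int_def abs_val_power abs_val_inverse subfield_inverse[OF K])

lemma abs_val_sum_le: "(\<And>i. i \<in> I \<Longrightarrow> h i \<in> K) \<Longrightarrow> f (sum h I) \<le> (\<Sum>i\<in>I. f (h i))"
proof (induction I rule: infinite_finite_induct)
  case (insert i I)
  then have "f (sum h (insert i I)) \<le> f (h i) + f (sum h I)"
    using abs_val_triangle[OF f] subfield_sum[OF K, of I h] by simp
  with insert show ?case by simp
qed (simp_all add: abs_val_zero[OF f])

lemma abs_val_le_of_vanishing_combination:
  assumes I: "finite I" "i0 \<in> I" and K_mem: "\<forall>i\<in>I. a i \<in> K \<and> y i \<in> K"
    and zero: "(\<Sum>i\<in>I. a i * y i) = 0"
    and max: "\<forall>i\<in>I. f (a i) \<le> f (a i0)" and a0: "a i0 \<noteq> 0"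
  shows "f (y i0) \<le> (\<Sum>i\<in>I - {i0}. f (y i))"
proof -
  have terms: "a i * y i \<in> K" if "i \<in> I" for i
    using subfield_mult[OF K] K_mem that by blast
  have "a i0 * y i0 = - (\<Sum>i\<in>I - {i0}. a i * y i)"
    using zero sum.remove[OF I, of "\<lambda>i. a i * y i"] by (simp add: eq_neg_iff_add_eq_0)
  moreover have "(\<Sum>i\<in>I - {i0}. a i * y i) \<in> K"
    using terms by (intro subfield_sum[OF K]) auto
  ultimately have "f (a i0) * f (y i0) = f (\<Sum>i\<in>I - {i0}. a i * y i)"
    using abs_val_mult[OF f] abs_val_uminus K_mem I(2) by metis
  also have "\<dots> \<le> (\<Sum>i\<in>I - {i0}. f (a i) * f (y i))"
    using abs_val_sum_le[of "I - {i0}" "\<lambda>i. a i * y i"] terms abs_val_mult[OF f] K_mem by simp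
  also have "\<dots> \<le> (\<Sum>i\<in>I - {i0}. f (a i0) * f (y i))"
    using max abs_val_nonneg[OF f] by (intro sum_mono mult_right_mono) auto
  also have "\<dots> = f (a i0) * (\<Sum>i\<in>I - {i0}. f (y i))"
    by (simp add: sum_distrib_left)
  finally show ?thesis
    using abs_val_pos[OF f _ a0] K_mem I(2) by simp
qed

lemma abs_val_reverse_triangle: "x \<in> K \<Longrightarrow> y \<in> K \<Longrightarrow> f x - f y \<le> f (x + y)"
  using abs_val_triangle[OF f, of "x + y" "- y"] abs_val_uminus[of y]
  by (simp add: subfield_add[OF K] subfield_uminus[OF K])

lemma abs_val_one_plus:
  assumes "w \<in> K"
  shows "f w - 1 \<le> f (1 + w)" "1 - f w \<le> f (1 + w)" "f (1 + w) \<le> 1 + f w"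
  using abs_val_reverse_triangle[of w 1] abs_val_reverse_triangle[of 1 w]
    abs_val_triangle[OF f, of 1 w] assms subfield_one[OF K] abs_val_one
  by (simp_all add: add.commute)

lemma abs_val_one_plus_fraction:
  assumes "w \<in> K" "y \<in> K"
  shows "f (w * y / (1 + w)) = f w * f y / f (1 + w)"
  using abs_val_divide[OF subfield_mult[OF K assms] subfield_add[OF K subfield_one[OF K] assms(1)]]
    abs_val_mult[OF f assms] by simp

lemma abs_val_one_plus_fraction_gt_one:
  assumes "w \<in> K" "y \<in> K" "1 < f w" "1 < f w * (f y - 1)"
  shows "1 < f (w * y / (1 + w))"
proof -
  have "0 < f (1 + w)"
    using abs_val_one_plus(1)[OF assms(1)] assms(3) by linarith
  moreover have "f (1 + w) < f w * f y"
    using abs_val_one_plus(3)[OF assms(1)] assms(4) by (simp add: algebra_simps)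
  ultimately show ?thesis
    using abs_val_one_plus_fraction[OF assms(1,2)] by (simp add: less_divide_eq)
qed

lemma abs_val_one_plus_fraction_lt_one:
  assumes "w \<in> K" "y \<in> K" "1 < f w * (1 - f y) \<or> f w * (1 + f y) < 1"
  shows "f (w * y / (1 + w)) < 1"
proof -
  have "0 \<le> f w * f y"
    using abs_val_nonneg[OF f] by simp
  moreover have "f w * f y < f (1 + w)"
    using abs_val_one_plus(1,2)[OF assms(1)] assms(3) by (auto simp: algebra_simps)
  ultimately show ?thesis
    using abs_val_one_plus_fraction[OF assms(1,2)] by (simp add: divide_less_eq)
qed

lemma ln_abs_val_monomial:
  assumes "x \<in> K" "x \<noteq> 0" "y \<in> K" "y \<noteq> 0"
  shows "ln (f (x ^ n * y powi k)) = real n * ln (f x) + of_int k * ln (f y)"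
proof -
  have pos: "0 < f x" "0 < f y"
    using abs_val_pos[OF f] assms by auto
  have "f (x ^ n * y powi k) = f x ^ n * f y powr of_int k"
    using assms pos abs_val_mult[OF f] subfield_power[OF K] subfield_power_int[OF K]
    by (simp add: abs_val_power abs_val_power_int powr_real_of_int')
  then show ?thesis
    using pos by (simp add: ln_mult ln_realpow)
qed

lemma abs_val_exists_gt_one: "\<exists>y\<in>K. 1 < f y"
proof -
  obtain x where x: "x \<in> K" "x \<noteq> 0" "f x \<noteq> 1"
    using abs_val_nontrivial[OF f] by blast
  show ?thesis
  proof (cases "1 < f x")
    case False
    then have "f x < 1"
      using x(3) by simp
    then have "1 < f (inverse x)"
      using abs_val_inverse[OF x(1)] one_less_inverse abs_val_pos[OF f x(1,2)] by simp
    then show ?thesis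
      using subfield_inverse[OF K x(1)] by blast
  qed (use x(1) in blast)
qed

end

section \<open>Places\<close>

lemma place_of_self: "abs_val K f \<Longrightarrow> f \<in> place_of K f"
  unfolding place_of_def by (auto intro!: exI[of _ 1] simp: abs_val_nonneg)

lemma place_of_eq:
  assumes "g \<in> place_of K f"
  shows "place_of K g = place_of K f"
proof -
  obtain t where t: "0 < t" "\<forall>x\<in>K. g x = f x powr t"
    using assms unfolding place_of_def by blast
  show ?thesis
  proof (intro set_eqI iffI)
    fix h assume "h \<in> place_of K g"
    then obtain s where "0 < s" "\<forall>x\<in>K. h x = g x powr s" "abs_val K h"
      unfolding place_of_def by blast
    then show "h \<in> place_of K f"
      unfolding place_of_def using t by (auto intro!: exI[of _ "t * s"] simp: powr_powr)
  next
    fix h assume "h \<in> place_of K f"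
    then obtain s where "0 < s" "\<forall>x\<in>K. h x = f x powr s" "abs_val K h"
      unfolding place_of_def by blast
    then show "h \<in> place_of K g"
      unfolding place_of_def using t by (auto intro!: exI[of _ "s / t"] simp: powr_powr)
  qed
qed

lemma places_eq_place_of: "w \<in> places K \<Longrightarrow> g \<in> w \<Longrightarrow> w = place_of K g"
  unfolding places_def using place_of_eq by auto

lemma places_abs_val: "w \<in> places K \<Longrightarrow> g \<in> w \<Longrightarrow> abs_val K g"
  unfolding places_def place_of_def by blast

lemma places_nonempty: "w \<in> places K \<Longrightarrow> \<exists>g. g \<in> w"
  unfolding places_def using place_of_self by blast

lemma place_of_in_places: "abs_val K g \<Longrightarrow> place_of K g \<in> places K"
  unfolding places_def by blast

lemma places_powr:
  "w \<in> places K \<Longrightarrow> g \<in> w \<Longrightarrow> h \<in> w \<Longrightarrow> \<exists>t>0. \<forall>x\<in>K. h x = g x powr t"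
  using places_eq_place_of[of w K g] unfolding place_of_def by blast

definition restrict_abs :: "complex set \<Rightarrow> (complex \<Rightarrow> real) \<Rightarrow> complex \<Rightarrow> real" where
  "restrict_abs K g = (\<lambda>x. if x \<in> K then g x else 0)"

lemma place_divides_iff: "place_divides K w v \<longleftrightarrow> (\<exists>g\<in>w. restrict_abs K g \<in> v)"
  unfolding place_divides_def restrict_abs_def ..

lemma abs_val_restrict_abs:
  assumes "abs_val N g" "subfield K" "K \<subseteq> N" "\<exists>x\<in>K. x \<noteq> 0 \<and> g x \<noteq> 1"
  shows "abs_val K (restrict_abs K g)"
  using assms unfolding abs_val_def restrict_abs_def subfield_def by (auto simp: subset_iff)

lemma restrict_abs_eq: "abs_val K g \<Longrightarrow> restrict_abs K g = g"
  unfolding restrict_abs_def using abs_val_outside by fastforce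

lemma restrict_abs_restrict_abs: "K \<subseteq> Z \<Longrightarrow> restrict_abs K (restrict_abs Z g) = restrict_abs K g"
  unfolding restrict_abs_def by (rule ext) auto

lemma place_divides_restrict_abs:
  assumes w: "w \<in> places N" and v: "v \<in> places K" and d: "place_divides K w v" and g: "g \<in> w"
    and K: "subfield K" "K \<subseteq> N"
  shows "restrict_abs K g \<in> v"
proof -
  obtain g0 where g0: "g0 \<in> w" "restrict_abs K g0 \<in> v"
    using d unfolding place_divides_iff by blast
  obtain t where t: "0 < t" "\<forall>y\<in>N. g y = g0 y powr t"
    using places_powr[OF w g0(1) g] by blast
  obtain y where y: "y \<in> K" "y \<noteq> 0" "restrict_abs K g0 y \<noteq> 1"
    using abs_val_nontrivial[OF places_abs_val[OF v g0(2)]] by blast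
  have "g y \<noteq> 1"
    using t y abs_val_pos[OF places_abs_val[OF w g0(1)], of y] K(2)
    unfolding restrict_abs_def by auto
  then have "abs_val K (restrict_abs K g)"
    using abs_val_restrict_abs[OF places_abs_val[OF w g] K] y by blast
  then have "restrict_abs K g \<in> place_of K (restrict_abs K g0)"
    unfolding place_of_def using t K(2) by (auto simp: restrict_abs_def intro!: exI[of _ t])
  then show ?thesis
    using places_eq_place_of[OF v g0(2)] by simp
qed

lemma place_divides_powr:
  assumes "w \<in> places N" "v \<in> places K" "place_divides K w v" "g \<in> w" "f \<in> v"
    and "subfield K" "K \<subseteq> N"
  shows "\<exists>t>0. \<forall>x\<in>K. g x = f x powr t"
proof -
  have "restrict_abs K g \<in> place_of K f"
    using place_divides_restrict_abs[OF assms(1-4,6,7)] places_eq_place_of[OF assms(2,5)] by simp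
  then show ?thesis
    unfolding place_of_def restrict_abs_def by auto
qed

lemma places_distinct_not_equiv:
  assumes "w \<in> places L" "w' \<in> places L" "g \<in> w" "g' \<in> w'" "w \<noteq> w'"
  shows "g' \<notin> place_of L g"
proof
  assume "g' \<in> place_of L g"
  then have "place_of L g' = place_of L g"
    by (rule place_of_eq)
  then show False
    using places_eq_place_of assms by metis
qed

lemma place_divides_unique:
  assumes "w \<in> places N" "v \<in> places K" "v' \<in> places K"
    and "place_divides K w v" "place_divides K w v'" "subfield K" "K \<subseteq> N"
  shows "v = v'"
proof -
  obtain g where g: "g \<in> w"
    using places_nonempty[OF assms(1)] by blast
  have "restrict_abs K g \<in> v" "restrict_abs K g \<in> v'"
    using place_divides_restrict_abs[OF assms(1) _ _ g assms(6,7)] assms(2-5) by auto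
  then show ?thesis
    using places_eq_place_of assms(2,3) by metis
qed

lemma place_divides_refl: "w \<in> places K \<Longrightarrow> place_divides K w w"
  unfolding place_divides_iff
  using places_nonempty restrict_abs_eq[OF places_abs_val] by metis

lemma place_divides_same_field:
  "w \<in> places K \<Longrightarrow> v \<in> places K \<Longrightarrow> place_divides K w v \<Longrightarrow> subfield K \<Longrightarrow> w = v"
  using place_divides_unique[of w K w K v] place_divides_refl by blast

lemma place_divides_trans:
  assumes x: "x \<in> places N" and y: "y \<in> places Z" and v: "v \<in> places K"
    and "place_divides Z x y" "place_divides K y v"
    and "subfield K" "subfield Z" "K \<subseteq> Z" "Z \<subseteq> N"
  shows "place_divides K x v"
proof -
  obtain g where g: "g \<in> x"
    using places_nonempty[OF x] by blast
  have "restrict_abs Z g \<in> y"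
    using place_divides_restrict_abs[OF x y _ g] assms(4,7,9) .
  then have "restrict_abs K g \<in> v"
    using place_divides_restrict_abs[OF y v] assms(5,6,8) restrict_abs_restrict_abs[OF assms(8)]
    by metis
  then show ?thesis
    unfolding place_divides_iff using g by blast
qed

lemma place_divides_intermediate:
  assumes y: "y \<in> places N" and v: "v \<in> places K" and d: "place_divides K y v"
    and sf: "subfield K" "subfield E" "K \<subseteq> E" "E \<subseteq> N"
  shows "\<exists>u\<in>places E. place_divides E y u \<and> place_divides K u v"
proof -
  obtain g where g: "g \<in> y"
    using places_nonempty[OF y] by blast
  have gv: "restrict_abs K g \<in> v"
    using place_divides_restrict_abs[OF y v d g sf(1)] sf(3,4) by blast
  obtain z where "z \<in> K" "z \<noteq> 0" "restrict_abs K g z \<noteq> 1"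
    using abs_val_nontrivial[OF places_abs_val[OF v gv]] by blast
  then have gE: "abs_val E (restrict_abs E g)"
    using abs_val_restrict_abs[OF places_abs_val[OF y g] sf(2,4)] sf(3)
    unfolding restrict_abs_def by auto
  let ?u = "place_of E (restrict_abs E g)"
  have "restrict_abs E g \<in> ?u"
    using place_of_self[OF gE] .
  moreover have "restrict_abs K (restrict_abs E g) \<in> v"
    using gv restrict_abs_restrict_abs[OF sf(3)] by simp
  ultimately have "place_divides E y ?u" "place_divides K ?u v"
    unfolding place_divides_iff using g by blast+
  then show ?thesis
    using place_of_in_places[OF gE] by blast
qed

section \<open>Inequivalent absolute values\<close>

lemma real_eq_if_same_rational_cuts:
  fixes \<alpha> \<beta> :: real
  assumes upper: "\<And>q. q \<in> \<rat> \<Longrightarrow> \<alpha> < q \<Longrightarrow> \<beta> < q"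
    and lower: "\<And>q. q \<in> \<rat> \<Longrightarrow> q < \<alpha> \<Longrightarrow> q < \<beta>"
  shows "\<beta> = \<alpha>"
proof (rule ccontr)
  assume "\<beta> \<noteq> \<alpha>"
  then consider "\<alpha> < \<beta>" | "\<beta> < \<alpha>"
    by linarith
  then show False
  proof cases
    case 1
    then obtain q where "q \<in> \<rat>" "\<alpha> < q" "q < \<beta>"
      using Rats_dense_in_real by blast
    then show False
      using upper by fastforce
  next
    case 2
    then obtain q where "q \<in> \<rat>" "\<beta> < q" "q < \<alpha>"
      using Rats_dense_in_real by blast
    then show False
      using lower by fastforce
  qed
qed

text \<open>Testing the monomials \<open>x\<^sup>r y\<^sup>-\<^sup>p\<close> compares \<open>ln (g x) / ln (g y)\<close> with \<open>p / r\<close>.\<close>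

lemma log_ratio_less_rational:
  assumes g: "abs_val L g" and h: "abs_val L h" and L: "subfield L"
    and imp: "\<And>x. x \<in> L \<Longrightarrow> g x < 1 \<Longrightarrow> h x < 1"
    and y: "y \<in> L" "1 < g y" "1 < h y" and x: "x \<in> L" "x \<noteq> 0"
    and q: "q \<in> \<rat>" "ln (g x) / ln (g y) < q"
  shows "ln (h x) / ln (h y) < q"
proof -
  have y0: "y \<noteq> 0"
    using y(2) abs_val_zero[OF g] by auto
  obtain p r where pr: "0 < r" "q = of_int p / of_int r"
    using Rats_cases'[OF q(1)] by metis
  let ?u = "x ^ nat r * y powi (- p)"
  have u: "?u \<in> L" "?u \<noteq> 0"
    using x y(1) y0 L by (auto intro: subfield_mult subfield_power subfield_power_int)
  have "of_int r * ln (g x) < of_int p * ln (g y)"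
    using q(2) pr y(2) by (simp add: field_simps)
  then have "ln (g ?u) < 0"
    using ln_abs_val_monomial[OF g L x y(1) y0, of "nat r" "- p"] pr(1) by simp
  then have "h ?u < 1"
    using imp[OF u(1)] abs_val_pos[OF g u] by simp
  then have "ln (h ?u) < 0"
    using abs_val_pos[OF h u] by simp
  then have "of_int r * ln (h x) < of_int p * ln (h y)"
    using ln_abs_val_monomial[OF h L x y(1) y0, of "nat r" "- p"] pr(1) by simp
  also have "of_int p = of_int r * q"
    using pr by simp
  finally have "ln (h x) < q * ln (h y)"
    using pr(1) by (simp add: mult.assoc)
  then show ?thesis
    using y(3) by (simp add: pos_divide_less_eq)
qed

lemma log_ratio_eq:
  assumes g: "abs_val L g" and h: "abs_val L h" and L: "subfield L"
    and imp: "\<And>x. x \<in> L \<Longrightarrow> g x < 1 \<Longrightarrow> h x < 1"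
    and y: "y \<in> L" "1 < g y" "1 < h y" and x: "x \<in> L" "x \<noteq> 0"
  shows "ln (h x) / ln (h y) = ln (g x) / ln (g y)"
proof (rule real_eq_if_same_rational_cuts)
  have ix: "inverse x \<in> L" "inverse x \<noteq> 0"
    using subfield_inverse[OF L x(1)] x(2) by auto
  have ln_inv: "ln (f (inverse x)) = - ln (f x)" if "abs_val L f" for f
    using abs_val_inverse[OF that L x(1)] abs_val_pos[OF that x] by (simp add: ln_inverse)
  fix q :: real assume "q \<in> \<rat>" "q < ln (g x) / ln (g y)"
  then have "ln (h (inverse x)) / ln (h y) < - q"
    using log_ratio_less_rational[OF g h L _ y ix, of "- q"] imp ln_inv[OF g] by simp
  then show "q < ln (h x) / ln (h y)"
    using ln_inv[OF h] by simp
qed (use log_ratio_less_rational[OF g h L _ y x] imp in blast)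

lemma place_of_if_lt_one_imp_lt_one:
  assumes g: "abs_val L g" and h: "abs_val L h" and L: "subfield L"
    and imp: "\<And>x. x \<in> L \<Longrightarrow> g x < 1 \<Longrightarrow> h x < 1"
  shows "h \<in> place_of L g"
proof -
  obtain y where y: "y \<in> L" "1 < g y"
    using abs_val_exists_gt_one[OF g L] by blast
  have y0: "y \<noteq> 0"
    using y abs_val_zero[OF g] by auto
  have "h (inverse y) < 1"
    using imp[OF subfield_inverse[OF L y(1)]] abs_val_inverse[OF g L y(1)] y(2)
    by (simp add: inverse_less_1_iff)
  then have hy: "1 < h y"
    using abs_val_inverse[OF h L y(1)] abs_val_pos[OF h y(1) y0] by (simp add: inverse_less_1_iff)
  define t where "t = ln (h y) / ln (g y)"
  have t: "0 < t"
    unfolding t_def using y(2) hy by simp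
  have "h x = g x powr t" if x: "x \<in> L" for x
  proof (cases "x = 0")
    case True
    then show ?thesis
      using abs_val_zero[OF g] abs_val_zero[OF h] by simp
  next
    case False
    have "ln (h x) = t * ln (g x)"
      using log_ratio_eq[OF g h L imp y hy x False] y(2) hy unfolding t_def by (simp add: field_simps)
    then have "h x = exp (t * ln (g x))"
      using abs_val_pos[OF h x False] by (metis exp_ln)
    then show ?thesis
      using abs_val_pos[OF g x False] by (simp add: powr_def)
  qed
  then show ?thesis
    unfolding place_of_def using h t by blast
qed

lemma abs_val_separating_element:
  assumes g: "abs_val L g" and h: "abs_val L h" and L: "subfield L" and ne: "h \<notin> place_of L g"
  shows "\<exists>z\<in>L. 1 < g z \<and> h z < 1"
proof -
  obtain x where x: "x \<in> L" "g x < 1" "1 \<le> h x"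
    using place_of_if_lt_one_imp_lt_one[OF g h L] ne by force
  have "g \<notin> place_of L h"
    using ne place_of_eq place_of_self[OF h] by blast
  then obtain y where y: "y \<in> L" "h y < 1" "1 \<le> g y"
    using place_of_if_lt_one_imp_lt_one[OF h g L] by force
  have x0: "x \<noteq> 0"
    using x(3) abs_val_zero[OF h] by auto
  have "1 < g (y / x)" "h (y / x) < 1"
    using x y abs_val_pos[OF g x(1) x0] abs_val_pos[OF h x(1) x0]
      abs_val_divide[OF g L y(1) x(1)] abs_val_divide[OF h L y(1) x(1)]
    by (simp_all add: less_divide_eq divide_less_eq)
  then show ?thesis
    using subfield_divide[OF L y(1) x(1)] by blast
qed

lemma eventually_less_power:
  assumes "1 < (a::real)"
  shows "eventually (\<lambda>r. C < a ^ r) sequentially"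
proof -
  obtain N where "C < a ^ N"
    using real_arch_pow[OF assms] by blast
  then have "C < a ^ r" if "N \<le> r" for r
    using power_increasing[OF that, of a] assms \<open>C < a ^ N\<close> by linarith
  then show ?thesis
    unfolding eventually_sequentially by blast
qed

lemma eventually_power_less:
  "0 \<le> (a::real) \<Longrightarrow> a < 1 \<Longrightarrow> 0 < e \<Longrightarrow> eventually (\<lambda>r. a ^ r < e) sequentially"
  by (intro order_tendstoD(2)[OF LIMSEQ_power_zero]) simp_all

lemma eventually_sum_powers_less_one:
  fixes x :: "'a \<Rightarrow> real"
  assumes "finite A" "\<And>a. a \<in> A \<Longrightarrow> 0 \<le> x a" "\<And>a. a \<in> A \<Longrightarrow> x a < 1"
  shows "eventually (\<lambda>r. (\<Sum>a\<in>A. x a ^ r) < 1) sequentially"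
proof -
  have "(\<lambda>r. \<Sum>a\<in>A. x a ^ r) \<longlonglongrightarrow> (\<Sum>a\<in>A. 0)"
    using assms(2,3) by (intro tendsto_sum LIMSEQ_power_zero) auto
  then show ?thesis
    by (intro order_tendstoD(2)) auto
qed

text \<open>Induction step of the approximation theorem: \<open>z\<close> already works for \<open>g0\<close> and the \<open>G i\<close>,
  and \<open>y\<close> separates \<open>g0\<close> from \<open>h\<close>. If \<open>h z < 1\<close> then \<open>z\<close> itself works; otherwise a
  high power of \<open>z\<close> is combined with \<open>y\<close>.\<close>

context
  fixes L g0 h J G z y
  assumes L: "subfield L" and g0: "abs_val L g0" and h: "abs_val L h" and J: "finite J"
    and G: "\<And>i. i \<in> J \<Longrightarrow> abs_val L (G i)"
    and z: "z \<in> L" "1 < g0 z" "\<And>i. i \<in> J \<Longrightarrow> G i z < 1"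
    and y: "y \<in> L" "1 < g0 y" "h y < 1"
begin

lemma approximation_step_unit:
  assumes hz: "h z = 1"
  shows "\<exists>u\<in>L. 1 < g0 u \<and> h u < 1 \<and> (\<forall>i\<in>J. G i u < 1)"
proof -
  have y0: "y \<noteq> 0"
    using y(2) abs_val_zero[OF g0] by auto
  have Gy: "0 < G i y" if "i \<in> J" for i
    using abs_val_pos[OF G[OF that] y(1) y0] .
  have "eventually (\<lambda>r. \<forall>i\<in>J. G i z ^ r < 1 / G i y) sequentially"
    using J G z(3) Gy
    by (intro eventually_ball_finite ballI eventually_power_less) (auto intro: abs_val_nonneg[OF G])
  then obtain r where r: "\<forall>i\<in>J. G i z ^ r < 1 / G i y"
    using eventually_happens'[OF sequentially_bot] by blast
  have zr: "z ^ r \<in> L"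
    using subfield_power[OF L z(1)] .
  have product: "f (z ^ r * y) = f z ^ r * f y" if "abs_val L f" for f
    using abs_val_mult[OF that zr y(1)] abs_val_power[OF that L z(1)] by simp
  have "1 < 1 * g0 y"
    using y(2) by simp
  also have "\<dots> \<le> g0 z ^ r * g0 y"
    using z(2) y(2) by (intro mult_right_mono one_le_power) auto
  finally have "1 < g0 (z ^ r * y)"
    using product[OF g0] by simp
  moreover have "h (z ^ r * y) < 1"
    using product[OF h] hz y(3) by simp
  moreover have "G i (z ^ r * y) < 1" if "i \<in> J" for i
    using product[OF G[OF that]] r that Gy[OF that] by (simp add: less_divide_eq)
  ultimately show ?thesis
    using subfield_mult[OF L zr y(1)] by blast
qed

lemma approximation_step_large:
  assumes hz: "1 < h z"
  shows "\<exists>u\<in>L. 1 < g0 u \<and> h u < 1 \<and> (\<forall>i\<in>J. G i u < 1)"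
proof -
  have y0: "y \<noteq> 0"
    using y(2) abs_val_zero[OF g0] by auto
  have Gy: "0 < G i y" if "i \<in> J" for i
    using abs_val_pos[OF G[OF that] y(1) y0] .
  have "eventually (\<lambda>r. 1 / (g0 y - 1) < g0 z ^ r \<and> 1 / (1 - h y) < h z ^ r
      \<and> (\<forall>i\<in>J. G i z ^ r < 1 / (G i y + 1)) \<and> 1 < g0 z ^ r) sequentially"
    using J G z(2,3) Gy hz
    by (intro eventually_conj eventually_less_power eventually_ball_finite ballI eventually_power_less)
      (auto intro: abs_val_nonneg[OF G] add_pos_pos)
  then obtain r where r: "1 / (g0 y - 1) < g0 z ^ r" "1 / (1 - h y) < h z ^ r"
    "\<forall>i\<in>J. G i z ^ r < 1 / (G i y + 1)" "1 < g0 z ^ r"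
    using eventually_happens'[OF sequentially_bot] by blast
  have zr: "z ^ r \<in> L"
    using subfield_power[OF L z(1)] .
  have power: "f (z ^ r) = f z ^ r" if "abs_val L f" for f
    using abs_val_power[OF that L z(1)] .
  have "1 < g0 (z ^ r * y / (1 + z ^ r))"
    using r(1,4) y(2) power[OF g0]
    by (intro abs_val_one_plus_fraction_gt_one[OF g0 L zr y(1)]) (simp_all add: divide_less_eq mult.commute)
  moreover have "h (z ^ r * y / (1 + z ^ r)) < 1"
    using r(2) y(3) power[OF h]
    by (intro abs_val_one_plus_fraction_lt_one[OF h L zr y(1)]) (simp add: divide_less_eq mult.commute)
  moreover have "G i (z ^ r * y / (1 + z ^ r)) < 1" if i: "i \<in> J" for i
    using r(3) i Gy[OF i] power[OF G[OF i]]
    by (intro abs_val_one_plus_fraction_lt_one[OF G[OF i] L zr y(1)])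
      (simp add: less_divide_eq add_pos_pos add.commute)
  ultimately show ?thesis
    using subfield_divide[OF L subfield_mult[OF L zr y(1)] subfield_add[OF L subfield_one[OF L] zr]]
    by blast
qed

end

lemma abs_val_approximation:
  assumes L: "subfield L" and g0: "abs_val L g0" and J: "finite J"
    and G: "\<And>i. i \<in> J \<Longrightarrow> abs_val L (G i)" and ne: "\<And>i. i \<in> J \<Longrightarrow> G i \<notin> place_of L g0"
  shows "\<exists>z\<in>L. 1 < g0 z \<and> (\<forall>i\<in>J. G i z < 1)"
  using J G ne
proof (induction J rule: finite_induct)
  case empty
  then show ?case
    using abs_val_exists_gt_one[OF g0 L] by blast
next
  case (insert j J)
  then obtain z where z: "z \<in> L" "1 < g0 z" "\<forall>i\<in>J. G i z < 1"
    by auto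
  obtain y where y: "y \<in> L" "1 < g0 y" "G j y < 1"
    using abs_val_separating_element[OF g0 insert.prems(1)[of j] L] insert.prems(2)[of j] by auto
  have "\<exists>u\<in>L. 1 < g0 u \<and> G j u < 1 \<and> (\<forall>i\<in>J. G i u < 1)"
  proof (cases "G j z" "1 :: real" rule: linorder_cases)
    case less
    then show ?thesis using z by blast
  next
    case equal
    from approximation_step_unit[OF L g0 insert.prems(1)[of j] insert.hyps(1) _ z(1,2) _ y equal]
    show ?thesis using insert.prems(1) z(3) by blast
  next
    case greater
    from approximation_step_large[OF L g0 insert.prems(1)[of j] insert.hyps(1) _ z(1,2) _ y greater]
    show ?thesis using insert.prems(1) z(3) by blast
  qed
  then show ?case
    by auto
qed

section \<open>Finitely many places above a place\<close>

definition places_above :: "complex set \<Rightarrow> complex set \<Rightarrow> (complex \<Rightarrow> real) set \<Rightarrow> (complex \<Rightarrow> real) set set" where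
  "places_above K L v = {w \<in> places L. place_divides K w v}"

lemma exists_diagonally_dominant:
  assumes L: "subfield L" and W: "finite W" and G: "\<And>w. w \<in> W \<Longrightarrow> abs_val L (G w)"
    and distinct: "\<And>w w'. w \<in> W \<Longrightarrow> w' \<in> W \<Longrightarrow> w \<noteq> w' \<Longrightarrow> G w' \<notin> place_of L (G w)"
  shows "\<exists>Y. \<forall>w\<in>W. Y w \<in> L \<and> (\<Sum>w'\<in>W - {w}. G w (Y w')) < G w (Y w)"
proof -
  have "\<forall>w\<in>W. \<exists>z\<in>L. 1 < G w z \<and> (\<forall>w'\<in>W - {w}. G w' z < 1)"
  proof
    fix w assume w: "w \<in> W"
    show "\<exists>z\<in>L. 1 < G w z \<and> (\<forall>w'\<in>W - {w}. G w' z < 1)"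
    proof (rule abs_val_approximation[OF L G[OF w]])
      show "finite (W - {w})"
        using W by simp
    qed (use G distinct w in auto)
  qed
  then obtain z where z: "\<forall>w\<in>W. z w \<in> L \<and> 1 < G w (z w) \<and> (\<forall>w'\<in>W - {w}. G w' (z w) < 1)"
    using bchoice by (metis (no_types, lifting))
  have "eventually (\<lambda>r. \<forall>w\<in>W. (\<Sum>w'\<in>W - {w}. G w (z w') ^ r) < 1) sequentially"
    using W z abs_val_nonneg[OF G]
    by (intro eventually_ball_finite[OF W] ballI eventually_sum_powers_less_one) auto
  then obtain r where r: "\<And>w. w \<in> W \<Longrightarrow> (\<Sum>w'\<in>W - {w}. G w (z w') ^ r) < 1"
    using eventually_happens'[OF sequentially_bot] by blast
  have power: "G w (z w' ^ r) = G w (z w') ^ r" if "w \<in> W" "w' \<in> W" for w w'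
    using abs_val_power[OF G[OF that(1)] L] z that(2) by blast
  have "\<forall>w\<in>W. z w ^ r \<in> L \<and> (\<Sum>w'\<in>W - {w}. G w (z w' ^ r)) < G w (z w ^ r)"
  proof
    fix w assume w: "w \<in> W"
    have "(\<Sum>w'\<in>W - {w}. G w (z w' ^ r)) < 1"
      using r[OF w] power[OF w] by simp
    also have "1 \<le> G w (z w) ^ r"
      using z w by (intro one_le_power) auto
    also have "\<dots> = G w (z w ^ r)"
      using power[OF w w] by simp
    finally show "z w ^ r \<in> L \<and> (\<Sum>w'\<in>W - {w}. G w (z w' ^ r)) < G w (z w ^ r)"
      using subfield_power[OF L] z w by blast
  qed
  then show ?thesis
    by (intro exI[of _ "\<lambda>w. z w ^ r"]) simp
qed

text \<open>Take \<open>w0\<close> with \<open>f0 (a w0)\<close> maximal. Since every \<open>G w\<close> restricts to a power of \<open>f0\<close>,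
  \<open>a w0\<close> is also a largest coefficient for \<open>G w0\<close>, contradicting dominance in row \<open>w0\<close>.\<close>

lemma diagonally_dominant_independent:
  assumes L: "subfield L" "K \<subseteq> L" and f0: "abs_val K f0" and W: "finite W"
    and G: "\<And>w. w \<in> W \<Longrightarrow> abs_val L (G w)"
    and GK: "\<And>w. w \<in> W \<Longrightarrow> \<exists>t>0. \<forall>x\<in>K. G w x = f0 x powr t"
    and Y: "\<And>w. w \<in> W \<Longrightarrow> Y w \<in> L"
    and dominant: "\<And>w. w \<in> W \<Longrightarrow> (\<Sum>w'\<in>W - {w}. G w (Y w')) < G w (Y w)"
    and a: "\<forall>w\<in>W. a w \<in> K" "(\<Sum>w\<in>W. a w * Y w) = 0"
  shows "\<forall>w\<in>W. a w = 0"
proof (rule ccontr)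
  assume "\<not> (\<forall>w\<in>W. a w = 0)"
  then obtain w1 where w1: "w1 \<in> W" "a w1 \<noteq> 0"
    by blast
  have "Max ((\<lambda>w. f0 (a w)) ` W) \<in> (\<lambda>w. f0 (a w)) ` W"
    using W w1(1) by (intro Max_in) auto
  then obtain w0 where w0: "w0 \<in> W" "f0 (a w0) = Max ((\<lambda>w. f0 (a w)) ` W)"
    by (metis (no_types, lifting) imageE)
  have max: "f0 (a w) \<le> f0 (a w0)" if "w \<in> W" for w
    unfolding w0(2) using W that by (intro Max_ge) auto
  have "0 < f0 (a w0)"
    using abs_val_pos[OF f0] a(1) w1 max[OF w1(1)] by fastforce
  then have aw0: "a w0 \<noteq> 0"
    using abs_val_zero[OF f0] by auto
  have "G w0 (a w) \<le> G w0 (a w0)" if "w \<in> W" for w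
  proof -
    obtain t where "0 < t" "\<forall>x\<in>K. G w0 x = f0 x powr t"
      using GK[OF w0(1)] by blast
    then show ?thesis
      using powr_mono2 abs_val_nonneg[OF f0] max[OF that] a(1) that w0(1) by simp
  qed
  moreover have "\<forall>w\<in>W. a w \<in> L \<and> Y w \<in> L"
    using a(1) L(2) Y by blast
  ultimately have "G w0 (Y w0) \<le> (\<Sum>w\<in>W - {w0}. G w0 (Y w))"
    using abs_val_le_of_vanishing_combination[OF G[OF w0(1)] L(1) W w0(1) _ a(2) _ aw0] by blast
  then show False
    using dominant[OF w0(1)] by simp
qed

lemma card_places_above_le:
  assumes B: "finite B" "L \<subseteq> span_over K B" and sf: "subfield K" "subfield L" "K \<subseteq> L"
    and v: "v \<in> places K" and W: "W \<subseteq> places_above K L v" "finite W"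
  shows "card W \<le> card B"
proof (rule ccontr)
  assume "\<not> card W \<le> card B"
  then have big: "card B < card W"
    by simp
  obtain f0 where f0: "f0 \<in> v"
    using places_nonempty[OF v] by blast
  define G :: "(complex \<Rightarrow> real) set \<Rightarrow> complex \<Rightarrow> real" where "G w = (SOME g. g \<in> w)" for w
  have w: "w \<in> places L" "place_divides K w v" if "w \<in> W" for w
    using W that unfolding places_above_def by auto
  have Gw: "G w \<in> w" if "w \<in> W" for w
    unfolding G_def using places_nonempty[OF w(1)[OF that]] by (rule someI_ex)
  have G: "abs_val L (G w)" if "w \<in> W" for w
    using places_abs_val[OF w(1)[OF that] Gw[OF that]] .
  have GK: "\<exists>t>0. \<forall>x\<in>K. G w x = f0 x powr t" if "w \<in> W" for w
    using place_divides_powr[OF w(1)[OF that] v w(2)[OF that] Gw[OF that] f0 sf(1,3)] .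
  have "G w' \<notin> place_of L (G w)" if "w \<in> W" "w' \<in> W" "w \<noteq> w'" for w w'
    using places_distinct_not_equiv[OF w(1)[OF that(1)] w(1)[OF that(2)] Gw[OF that(1)] Gw[OF that(2)]
        that(3)] .
  then obtain Y where Y: "\<forall>w\<in>W. Y w \<in> L \<and> (\<Sum>w'\<in>W - {w}. G w (Y w')) < G w (Y w)"
    using exists_diagonally_dominant[OF sf(2) W(2) G] by presburger
  have Y_span: "Y w \<in> span_over K B" if "w \<in> W" for w
    using Y that B(2) by (meson subsetD)
  obtain a where a: "\<forall>w\<in>W. a w \<in> K" "\<exists>w\<in>W. a w \<noteq> 0" "(\<Sum>w\<in>W. a w * Y w) = 0"
    using span_over_dependent[OF B(1) sf(1) W(2) big, of Y] Y_span by blast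
  have "\<forall>w\<in>W. a w = 0"
  proof (rule diagonally_dominant_independent[OF sf(2,3) places_abs_val[OF v f0] W(2) G GK _ _ a(1,3)])
    show "Y w \<in> L" "(\<Sum>w'\<in>W - {w}. G w (Y w')) < G w (Y w)" if "w \<in> W" for w
      using Y that by blast+
  qed
  then show False
    using a(2) by blast
qed

theorem finite_places_above:
  assumes "finite_ext K L" "v \<in> places K"
  shows "finite (places_above K L v)"
proof (rule ccontr)
  assume "infinite (places_above K L v)"
  obtain B where B: "finite B" "L \<subseteq> span_over K B" and sf: "subfield K" "subfield L" "K \<subseteq> L"
    using assms(1) unfolding finite_ext_iff_span_over by blast
  obtain W where W: "finite W" "W \<subseteq> places_above K L v" "card W = Suc (card B)"
    using infinite_arbitrarily_large[OF \<open>infinite _\<close>] by blast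
  then show False
    using card_places_above_le[OF B sf assms(2) W(2,1)] by simp
qed

lemma places_above_tower:
  assumes "finite_ext K Z" "finite_ext Z N" "v \<in> places K"
  shows "(\<Union>y\<in>places_above K Z v. places_above Z N y) = places_above K N v"
proof (intro set_eqI iffI)
  fix x assume "x \<in> (\<Union>y\<in>places_above K Z v. places_above Z N y)"
  then obtain y where "y \<in> places Z" "place_divides K y v" "x \<in> places N" "place_divides Z x y"
    unfolding places_above_def by blast
  then show "x \<in> places_above K N v"
    using place_divides_trans[of x N y Z v K] assms finite_ext_imp_subfields
    unfolding places_above_def by blast
next
  fix x assume "x \<in> places_above K N v"
  then have x: "x \<in> places N" "place_divides K x v"
    unfolding places_above_def by auto
  then obtain u where "u \<in> places Z" "place_divides Z x u" "place_divides K u v"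
    using place_divides_intermediate[OF x(1) assms(3) x(2)] assms(1,2) finite_ext_imp_subfields
    by blast
  then show "x \<in> (\<Union>y\<in>places_above K Z v. places_above Z N y)"
    unfolding places_above_def using x by blast
qed

lemma sum_places_above_tower:
  assumes "finite_ext K Z" "finite_ext Z N" "v \<in> places K"
  shows "(\<Sum>y\<in>places_above K Z v. \<Sum>x\<in>places_above Z N y. f x) = (\<Sum>x\<in>places_above K N v. f x)"
proof -
  have "finite (places_above K Z v)"
    using finite_places_above[OF assms(1,3)] .
  moreover have "\<forall>y\<in>places_above K Z v. finite (places_above Z N y)"
    using finite_places_above[OF assms(2)] unfolding places_above_def by blast
  moreover have "\<forall>y\<in>places_above K Z v. \<forall>y'\<in>places_above K Z v.
      y \<noteq> y' \<longrightarrow> places_above Z N y \<inter> places_above Z N y' = {}"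
    using place_divides_unique finite_ext_imp_subfields[OF assms(1)]
      finite_ext_imp_subfields[OF assms(2)]
    unfolding places_above_def by blast
  ultimately show ?thesis
    using sum.UNION_disjoint[of "places_above K Z v" "places_above Z N" f]
      places_above_tower[OF assms] by simp
qed

section \<open>Consistent maps and the restriction map\<close>

lemma JJ_iff: "(K, v) \<in> JJ F S \<longleftrightarrow> finite_ext F K \<and> v \<in> places K \<and> (\<exists>u\<in>S. place_divides F v u)"
  by (simp add: JJ_def M_def)

lemma consistent_iff:
  "consistent F S c \<longleftrightarrow> (\<forall>K v L. (K, v) \<in> JJ F S \<and> finite_ext K L \<longrightarrow>
     c (K, v) = (\<Sum>w\<in>places_above K L v. c (L, w)))"
  unfolding consistent_def places_above_def ..

lemma Jstar_consistent: "c \<in> Jstar F S \<Longrightarrow> consistent F S c"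
  and Jstar_outside: "c \<in> Jstar F S \<Longrightarrow> p \<notin> JJ F S \<Longrightarrow> c p = 0"
  unfolding Jstar_def by blast+

lemma JJ_Rats_imp: "(K, v) \<in> JJ \<rat> S \<Longrightarrow> number_field K \<and> v \<in> places K"
  unfolding JJ_iff number_field_def by blast

lemma restr_eq: "p \<in> JJ F T \<Longrightarrow> restr F T c p = c p"
  unfolding restr_def by simp

text \<open>Consistency along \<open>K \<subseteq> FK\<close> forces the value of a preimage under restriction.\<close>

definition lift_consistent ::
  "complex set \<Rightarrow> (complex \<Rightarrow> real) set set \<Rightarrow> (complex set \<times> (complex \<Rightarrow> real) set \<Rightarrow> real)
    \<Rightarrow> complex set \<times> (complex \<Rightarrow> real) set \<Rightarrow> real" where
  "lift_consistent F S d = (\<lambda>(K, v). if (K, v) \<in> JJ \<rat> S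
     then (\<Sum>w\<in>places_above K (compositum F K) v. d (compositum F K, w)) else 0)"

context
  fixes S :: "(complex \<Rightarrow> real) set set" and F :: "complex set"
  assumes S: "S \<subseteq> places \<rat>" and F: "number_field F"
begin

lemma JJ_Rats_places_above:
  assumes "(K, v) \<in> JJ \<rat> S" "finite_ext K L" "w \<in> places_above K L v"
  shows "(L, w) \<in> JJ \<rat> S"
proof -
  obtain s where s: "number_field K" "v \<in> places K" "s \<in> S" "place_divides \<rat> v s"
    using assms(1) unfolding JJ_iff number_field_def by blast
  have w: "w \<in> places L" "place_divides K w v"
    using assms(3) unfolding places_above_def by auto
  have K: "subfield K"
    using number_field_subfield[OF s(1)] .
  have "place_divides \<rat> w s"
    using place_divides_trans[OF w(1) s(2) _ w(2) s(4) subfield_Rats K Rats_subset_subfield[OF K]]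
      finite_ext_imp_subfields[OF assms(2)] S s(3) by blast
  then show ?thesis
    using number_field_finite_ext[OF s(1) assms(2)] w(1) s(3)
    unfolding JJ_iff number_field_def by blast
qed

lemma JJ_M_iff: "(K, v) \<in> JJ F (M \<rat> F S) \<longleftrightarrow> (K, v) \<in> JJ \<rat> S \<and> F \<subseteq> K"
proof -
  have sF: "subfield F" and QF: "\<rat> \<subseteq> F"
    using number_field_subfield[OF F] Rats_subset_subfield by blast+
  show ?thesis
  proof
    assume "(K, v) \<in> JJ F (M \<rat> F S)"
    then obtain u s where h: "finite_ext F K" "v \<in> places K" "u \<in> places F" "place_divides F v u"
      "s \<in> S" "place_divides \<rat> u s"
      unfolding JJ_iff M_def by blast
    have "place_divides \<rat> v s"
      using place_divides_trans[OF h(2) h(3) _ h(4) h(6) subfield_Rats sF QF]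
        finite_ext_imp_subfields[OF h(1)] S h(5) by blast
    then show "(K, v) \<in> JJ \<rat> S \<and> F \<subseteq> K"
      using number_field_finite_ext[OF F h(1)] h finite_ext_imp_subfields[OF h(1)]
      unfolding JJ_iff number_field_def by blast
  next
    assume "(K, v) \<in> JJ \<rat> S \<and> F \<subseteq> K"
    then obtain s where h: "number_field K" "v \<in> places K" "s \<in> S" "place_divides \<rat> v s" "F \<subseteq> K"
      unfolding JJ_iff number_field_def by blast
    obtain u where "u \<in> places F" "place_divides F v u" "place_divides \<rat> u s"
      using place_divides_intermediate[OF h(2) _ h(4) subfield_Rats sF QF h(5)] S h(3) by blast
    then show "(K, v) \<in> JJ F (M \<rat> F S)"
      using number_field_imp_finite_ext[OF h(1) sF h(5)] h unfolding JJ_iff M_def by blast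
  qed
qed

lemma compositum_in_JJ_M:
  assumes "(K, v) \<in> JJ \<rat> S" "w \<in> places_above K (compositum F K) v"
  shows "(compositum F K, w) \<in> JJ F (M \<rat> F S)"
proof -
  have "finite_ext K (compositum F K)"
    using finite_ext_compositum[OF F number_field_subfield] JJ_Rats_imp[OF assms(1)] by blast
  then show ?thesis
    using JJ_Rats_places_above[OF assms(1) _ assms(2)] JJ_M_iff subset_compositum_left by blast
qed

lemma consistent_eq_sum_compositum:
  assumes "consistent \<rat> S c" "(K, v) \<in> JJ \<rat> S"
  shows "c (K, v) = (\<Sum>w\<in>places_above K (compositum F K) v. c (compositum F K, w))"
  using assms finite_ext_compositum[OF F number_field_subfield] JJ_Rats_imp
  unfolding consistent_iff by blast

lemma restr_in_Jstar:
  assumes c: "c \<in> Jstar \<rat> S"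
  shows "restr F (M \<rat> F S) c \<in> Jstar F (M \<rat> F S)"
proof -
  have "consistent F (M \<rat> F S) (restr F (M \<rat> F S) c)"
    unfolding consistent_iff
  proof (intro allI impI, elim conjE)
    fix K v L assume Kv: "(K, v) \<in> JJ F (M \<rat> F S)" and L: "finite_ext K L"
    then have Kv': "(K, v) \<in> JJ \<rat> S" "F \<subseteq> K"
      using JJ_M_iff by auto
    have "(L, w) \<in> JJ F (M \<rat> F S)" if "w \<in> places_above K L v" for w
      using JJ_Rats_places_above[OF Kv'(1) L that] Kv'(2) finite_ext_imp_subfields[OF L] JJ_M_iff
      by blast
    then have "(\<Sum>w\<in>places_above K L v. c (L, w))
        = (\<Sum>w\<in>places_above K L v. restr F (M \<rat> F S) c (L, w))"
      by (intro sum.cong) (simp_all add: restr_eq)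
    moreover have "c (K, v) = (\<Sum>w\<in>places_above K L v. c (L, w))"
      using Jstar_consistent[OF c] Kv'(1) L unfolding consistent_iff by blast
    ultimately show "restr F (M \<rat> F S) c (K, v)
        = (\<Sum>w\<in>places_above K L v. restr F (M \<rat> F S) c (L, w))"
      using restr_eq[OF Kv] by simp
  qed
  then show ?thesis
    unfolding Jstar_def by (simp add: restr_def)
qed

lemma inj_on_restr: "inj_on (restr F (M \<rat> F S)) (Jstar \<rat> S)"
proof (rule inj_onI, rule ext)
  fix c d p
  assume c: "c \<in> Jstar \<rat> S" and d: "d \<in> Jstar \<rat> S"
    and eq: "restr F (M \<rat> F S) c = restr F (M \<rat> F S) d"
  show "c p = d p"
  proof (cases "p \<in> JJ \<rat> S")
    case False
    then show ?thesis
      using Jstar_outside[OF c] Jstar_outside[OF d] by simp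
  next
    case True
    obtain K v where p: "p = (K, v)"
      by (cases p)
    have "c (compositum F K, w) = d (compositum F K, w)"
      if "w \<in> places_above K (compositum F K) v" for w
      using restr_eq[OF compositum_in_JJ_M] True that eq unfolding p by metis
    then have "(\<Sum>w\<in>places_above K (compositum F K) v. c (compositum F K, w))
        = (\<Sum>w\<in>places_above K (compositum F K) v. d (compositum F K, w))"
      by (rule sum.cong[OF refl])
    then show ?thesis
      using consistent_eq_sum_compositum Jstar_consistent[OF c] Jstar_consistent[OF d] True
      unfolding p by simp
  qed
qed

lemma lift_consistent_in_Jstar:
  assumes d: "d \<in> Jstar F (M \<rat> F S)"
  shows "lift_consistent F S d \<in> Jstar \<rat> S"
proof -
  have "consistent \<rat> S (lift_consistent F S d)"
    unfolding consistent_iff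
  proof (intro allI impI, elim conjE)
    fix K v L assume Kv: "(K, v) \<in> JJ \<rat> S" and L: "finite_ext K L"
    have K: "number_field K" and v: "v \<in> places K"
      using JJ_Rats_imp[OF Kv] by auto
    define FK where "FK = compositum F K"
    define FL where "FL = compositum F L"
    have FK: "finite_ext K FK"
      unfolding FK_def using finite_ext_compositum[OF F number_field_subfield[OF K]] .
    have FL: "finite_ext L FL"
      unfolding FL_def using finite_ext_compositum[OF F number_field_subfield]
        number_field_finite_ext[OF K L] by blast
    have FKL: "finite_ext FK FL"
      unfolding FK_def FL_def using finite_ext_compositum_mono[OF F K L] .
    have "lift_consistent F S d (K, v) = (\<Sum>y\<in>places_above K FK v. d (FK, y))"
      unfolding lift_consistent_def FK_def using Kv by simp
    also have "\<dots> = (\<Sum>y\<in>places_above K FK v. \<Sum>x\<in>places_above FK FL y. d (FL, x))"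
    proof (rule sum.cong[OF refl])
      fix y assume "y \<in> places_above K FK v"
      then have "(FK, y) \<in> JJ F (M \<rat> F S)"
        using compositum_in_JJ_M[OF Kv] unfolding FK_def by blast
      then show "d (FK, y) = (\<Sum>x\<in>places_above FK FL y. d (FL, x))"
        using Jstar_consistent[OF d] FKL unfolding consistent_iff by blast
    qed
    also have "\<dots> = (\<Sum>x\<in>places_above K FL v. d (FL, x))"
      using sum_places_above_tower[OF FK FKL v] .
    also have "\<dots> = (\<Sum>w\<in>places_above K L v. \<Sum>x\<in>places_above L FL w. d (FL, x))"
      using sum_places_above_tower[OF L FL v, of "\<lambda>x. d (FL, x)"] by simp
    also have "\<dots> = (\<Sum>w\<in>places_above K L v. lift_consistent F S d (L, w))"
      using JJ_Rats_places_above[OF Kv L] unfolding lift_consistent_def FL_def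
      by (intro sum.cong) auto
    finally show "lift_consistent F S d (K, v)
        = (\<Sum>w\<in>places_above K L v. lift_consistent F S d (L, w))" .
  qed
  then show ?thesis
    unfolding Jstar_def lift_consistent_def by auto
qed

lemma restr_lift_consistent:
  assumes d: "d \<in> Jstar F (M \<rat> F S)"
  shows "restr F (M \<rat> F S) (lift_consistent F S d) = d"
proof (rule ext)
  fix p
  show "restr F (M \<rat> F S) (lift_consistent F S d) p = d p"
  proof (cases "p \<in> JJ F (M \<rat> F S)")
    case False
    then show ?thesis
      using Jstar_outside[OF d] unfolding restr_def by simp
  next
    case True
    obtain K v where p: "p = (K, v)"
      by (cases p)
    have Kv: "(K, v) \<in> JJ \<rat> S" "F \<subseteq> K"
      using True JJ_M_iff unfolding p by auto
    have K: "subfield K" and v: "v \<in> places K"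
      using JJ_Rats_imp[OF Kv(1)] number_field_subfield by auto
    have "places_above K K v = {v}"
      unfolding places_above_def
      using place_divides_same_field[OF _ v _ K] place_divides_refl[OF v] v by blast
    then show ?thesis
      using restr_eq[OF True] Kv compositum_eq[OF K Kv(2)]
      unfolding p lift_consistent_def by simp
  qed
qed

end

theorem theorem5p2:
  fixes S :: "(complex \<Rightarrow> real) set set" and F :: "complex set"
  assumes "S \<noteq> {}" and "S \<subseteq> places \<rat>" and "number_field F"
  defines "T \<equiv> M \<rat> F S"
  shows "bij_betw (restr F T) (Jstar \<rat> S) (Jstar F T)
    \<and> (\<forall>c\<in>Jstar \<rat> S. \<forall>d\<in>Jstar \<rat> S. restr F T (\<lambda>p. c p + d p) = (\<lambda>p. restr F T c p + restr F T d p))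
    \<and> (\<forall>a::real. \<forall>c\<in>Jstar \<rat> S. restr F T (\<lambda>p. a * c p) = (\<lambda>p. a * restr F T c p))"
proof -
  note S = assms(2) and F = assms(3)
  have "restr F T ` Jstar \<rat> S = Jstar F T"
  proof
    show "restr F T ` Jstar \<rat> S \<subseteq> Jstar F T"
      using restr_in_Jstar[OF S F] unfolding T_def by blast
    show "Jstar F T \<subseteq> restr F T ` Jstar \<rat> S"
      using restr_lift_consistent[OF S F] lift_consistent_in_Jstar[OF S F]
      unfolding T_def by (metis image_eqI subsetI)
  qed
  then have "bij_betw (restr F T) (Jstar \<rat> S) (Jstar F T)"
    using inj_on_restr[OF S F] unfolding T_def bij_betw_def by blast
  moreover have "restr F T (\<lambda>p. c p + d p) = (\<lambda>p. restr F T c p + restr F T d p)"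
    and "restr F T (\<lambda>p. a * c p) = (\<lambda>p. a * restr F T c p)" for a c d
    unfolding restr_def by auto
  ultimately show ?thesis
    by blast
qed

end
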